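(* Let $\mathscr{B}=\{A,B,C,D\}$ and let $S$ be the substitution $A\mapsto AB$, $B\mapsto AC$, $C\mapsto DB$, $D\mapsto DC$, with associated (Golay-Rudin-Shapiro) subshift $\Xi\subseteq\mathscr{B}^{\mathbb{Z}}$. For $x\in\{A,B,C,D\}$ and $k\in\mathbb{N}$ let $\eta^x_k=(S^k(x))^\infty$ and $\Xi^x_k=\mathrm{Orb}(\eta^x_k)$. Then $\Xi$ is periodically approximable and for each $x\in\{A,B,C,D\}$ the sequence $(\Xi^x_k)_k$ converges to $\Xi$ in the Hausdorff topology.
   Context: $S$ extends to finite words as a homomorphism for concatenation. The associated subshift is $\Xi=\{\xi\in\mathscr{B}^{\mathbb{Z}}:\text{every finite subword of }\xi\text{ is a subword of some }S^n(c),\ n\in\mathbb{N},\ c\in\mathscr{B}\}$. For a finite word $u$, $u^\infty$ is the two-sided periodic sequence repeating $u$. $\mathscr{B}^{\mathbb{Z}}$ has the product topology and shift $(T\xi)(j)=\xi(j-1)$, $\mathrm{Orb}(\eta)=\{T^n\eta:n\in\mathbb{Z}\}$. Subshifts (non-empty closed $T$-invariant subsets) carry the Hausdorff (Vietoris) topology (basis: $\{\Xi:\Xi\cap F=\emptyset,\Xi\cap O\neq\emptyset\ \forall O\in\mathcal{F}\}$, $F$ closed, $\mathcal{F}$ a finite family of open sets). Periodically approximable means being a limit of subshifts $\mathrm{Orb}(\eta)$ with $\eta$ periodic. *)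

theory Defs
  imports "HOL-Analysis.Analysis" "HOL-Library.Sublist"
begin

datatype letter = A | B | C | D

fun grs_letter :: "letter \<Rightarrow> letter list" where
  "grs_letter A = [A, B]"
| "grs_letter B = [A, C]"
| "grs_letter C = [D, B]"
| "grs_letter D = [D, C]"

definition grs :: "letter list \<Rightarrow> letter list" where
  "grs w = concat (map grs_letter w)"

definition seq_word :: "(int \<Rightarrow> 'a) \<Rightarrow> int \<Rightarrow> nat \<Rightarrow> 'a list" where
  "seq_word \<xi> i n = map (\<lambda>k. \<xi> (i + int k)) [0..<n]"

definition GRS_Xi :: "(int \<Rightarrow> letter) set" where
  "GRS_Xi = {\<xi>. \<forall>i n. \<exists>m c. sublist (seq_word \<xi> i n) ((grs ^^ m) [c])}"

definition per_seq :: "'a list \<Rightarrow> int \<Rightarrow> 'a" where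
  "per_seq u j = u ! nat (j mod int (length u))"

definition shiftT :: "(int \<Rightarrow> 'a) \<Rightarrow> int \<Rightarrow> 'a" where
  "shiftT \<xi> j = \<xi> (j - 1)"

definition shift_pow :: "int \<Rightarrow> (int \<Rightarrow> 'a) \<Rightarrow> int \<Rightarrow> 'a" where
  "shift_pow n \<xi> j = \<xi> (j - n)"

definition Orb :: "(int \<Rightarrow> 'a) \<Rightarrow> (int \<Rightarrow> 'a) set" where
  "Orb \<eta> = {shift_pow n \<eta> | n. True}"

definition periodic_seq :: "(int \<Rightarrow> 'a) \<Rightarrow> bool" where
  "periodic_seq \<eta> \<longleftrightarrow> (\<exists>p>0. \<forall>j. \<eta> (j + p) = \<eta> j)"

definition prodtop :: "(int \<Rightarrow> letter) topology" where
  "prodtop = product_topology (\<lambda>_. discrete_topology UNIV) UNIV"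

definition subshifts :: "(int \<Rightarrow> letter) set set" where
  "subshifts = {X. X \<noteq> {} \<and> closedin prodtop X \<and> shiftT ` X = X}"

text \<open>Hausdorff (Vietoris) topology on the set of subshifts, generated by the
  basis from the paper.\<close>
definition vietoris :: "(int \<Rightarrow> letter) set topology" where
  "vietoris = topology_generated_by
     {{X \<in> subshifts. X \<inter> F = {} \<and> (\<forall>U\<in>\<U>. X \<inter> U \<noteq> {})} | F \<U>.
        closedin prodtop F \<and> finite \<U> \<and> (\<forall>U\<in>\<U>. openin prodtop U)}"

definition periodically_approximable :: "(int \<Rightarrow> letter) set \<Rightarrow> bool" where
  "periodically_approximable X \<longleftrightarrow>
     (\<exists>\<eta>. (\<forall>k. periodic_seq (\<eta> k)) \<and> limitin vietoris (\<lambda>k. Orb (\<eta> k)) X sequentially)"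

definition eta :: "letter \<Rightarrow> nat \<Rightarrow> int \<Rightarrow> letter" where
  "eta x k = per_seq ((grs ^^ k) [x])"

end

theory Submission
  imports Defs
begin

text \<open>Every letter occurs in \<open>S\<^sup>3(e)\<close> for every \<open>e\<close>, so every legal word occurs
  in \<open>S\<^sup>k(x)\<close> for all large \<open>k\<close>, and the periodic points \<open>\<eta>\<^sup>x\<^sub>k\<close> eventually exhibit every
  window of \<open>\<Xi>\<close>. Conversely, writing \<open>S(x) = ab\<close>, the period of \<open>eta x (j + 1)\<close> is
  \<open>S\<^sup>j(a)S\<^sup>j(b)\<close>, and a window of length at most \<open>2\<^sup>j\<close> straddling two periods lies
  in \<open>S\<^sup>j(b)S\<^sup>j(a)\<close>, which is legal because \<open>ba\<close> is. In the Vietoris topology these two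
  facts say that \<open>Orb(\<eta>\<^sup>x\<^sub>k)\<close> eventually meets every open set meeting \<open>\<Xi>\<close> and,
  by compactness of the full shift, eventually avoids every closed set disjoint from \<open>\<Xi>\<close>.\<close>

section \<open>The substitution and its language\<close>

lemma grs_append [simp]: "grs (u @ v) = grs u @ grs v"
  by (simp add: grs_def)

lemma grs_pow_append: "(grs ^^ m) (u @ v) = (grs ^^ m) u @ (grs ^^ m) v"
  by (induct m) auto

lemma grs_pow_grs_pow: "(grs ^^ a) ((grs ^^ b) w) = (grs ^^ (a + b)) w"
  by (simp add: funpow_add)

lemma length_grs: "length (grs w) = 2 * length w"
proof -
  have "length (grs_letter c) = 2" for c
    by (cases c) auto
  then show ?thesis
    by (induct w) (auto simp: grs_def)
qed

lemma length_grs_pow: "length ((grs ^^ m) w) = 2 ^ m * length w"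
  by (induct m) (auto simp: length_grs)

lemma grs_pow_letter_ne_Nil: "(grs ^^ k) [x] \<noteq> []"
  using length_grs_pow[of k "[x]"] by auto

lemma sublist_grs_pow: "sublist u v \<Longrightarrow> sublist ((grs ^^ m) u) ((grs ^^ m) v)"
  unfolding sublist_def by (auto simp: grs_pow_append) blast

definition legal :: "letter list \<Rightarrow> bool" where
  "legal w \<longleftrightarrow> (\<exists>m c. sublist w ((grs ^^ m) [c]))"

lemma GRS_Xi_eq: "GRS_Xi = {\<xi>. \<forall>i n. legal (seq_word \<xi> i n)}"
  by (simp add: GRS_Xi_def legal_def)

lemma legal_sublist: "legal v \<Longrightarrow> sublist w v \<Longrightarrow> legal w"
  unfolding legal_def using sublist_order.order.trans by blast

lemma legal_grs_pow: "legal w \<Longrightarrow> legal ((grs ^^ j) w)"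
  unfolding legal_def by (metis grs_pow_grs_pow sublist_grs_pow)

lemma legal_grs_pow_letter: "legal ((grs ^^ j) [x])"
  unfolding legal_def by blast

lemma legal_swap_grs: "grs [x] = [a, b] \<Longrightarrow> legal [b, a]"
proof -
  assume ab: "grs [x] = [a, b]"
  have "sublist [B, A] ((grs ^^ 3) [A])" "sublist [C, A] ((grs ^^ 3) [A])"
    "sublist [B, D] ((grs ^^ 3) [A])" "sublist [C, D] ((grs ^^ 3) [D])"
    by (simp_all add: eval_nat_numeral grs_def sublist_Cons_right)
  then show ?thesis
    using ab unfolding legal_def by (cases x) (auto simp: grs_def)
qed

lemma letter_in_grs_pow_3: "sublist [c] ((grs ^^ 3) [e])"
  by (cases c; cases e) (simp_all add: eval_nat_numeral grs_def sublist_Cons_right)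

lemma letter_in_grs_pow:
  assumes "3 \<le> n"
  shows "sublist [c] ((grs ^^ n) [d])"
proof -
  obtain e r where er: "(grs ^^ (n - 3)) [d] = e # r"
    using grs_pow_letter_ne_Nil by (meson list.exhaust)
  have "(grs ^^ n) [d] = (grs ^^ 3) ((grs ^^ (n - 3)) [d])"
    using assms by (simp add: grs_pow_grs_pow)
  also have "\<dots> = (grs ^^ 3) [e] @ (grs ^^ 3) r"
    using er grs_pow_append[of 3 "[e]" r] by simp
  finally show ?thesis
    using letter_in_grs_pow_3[of c e] by (metis sublist_append_rightI sublist_order.order.trans)
qed

lemma legal_imp_eventually_sublist:
  assumes "legal w"
  shows "\<forall>\<^sub>F k in sequentially. sublist w ((grs ^^ k) [x])"
proof -
  obtain m c where w: "sublist w ((grs ^^ m) [c])"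
    using assms unfolding legal_def by blast
  show ?thesis
  proof (rule eventually_sequentiallyI[of "m + 3"])
    fix k assume k: "m + 3 \<le> k"
    then have "sublist ((grs ^^ m) [c]) ((grs ^^ m) ((grs ^^ (k - m)) [x]))"
      by (intro sublist_grs_pow letter_in_grs_pow) simp
    also have "(grs ^^ m) ((grs ^^ (k - m)) [x]) = (grs ^^ k) [x]"
      using k by (simp add: grs_pow_grs_pow)
    finally show "sublist w ((grs ^^ k) [x])"
      using w sublist_order.order.trans by blast
  qed
qed

section \<open>Windows of periodic sequences\<close>

lemma seq_word_per_seq:
  assumes "n \<le> length u"
  shows "seq_word (per_seq u) i n = take n (drop (nat (i mod int (length u))) (u @ u))"
proof (cases "n = 0")
  case True
  then show ?thesis by (simp add: seq_word_def)
next
  case False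
  define L where "L = length u"
  define q where "q = nat (i mod int L)"
  have L: "0 < L" "n \<le> L"
    using False assms unfolding L_def by auto
  have q: "q < L" "int q = i mod int L"
    using L unfolding q_def by (simp_all add: nat_less_iff)
  have "per_seq u (i + int t) = (u @ u) ! (q + t)" if "t < n" for t
  proof -
    have "(i + int t) mod int L = int ((q + t) mod L)"
      using q(2) by (simp add: mod_add_left_eq of_nat_mod)
    moreover have "(u @ u) ! (q + t) = u ! ((q + t) mod L)"
      using q(1) that L(2) by (cases "q + t < L") (auto simp: L_def nth_append le_mod_geq)
    ultimately show ?thesis
      by (simp add: per_seq_def L_def)
  qed
  moreover have "take n (drop q (u @ u)) ! t = (u @ u) ! (q + t)" if "t < n" for t
    using that q(1) L(2) by (simp add: L_def del: drop_append take_append)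
  ultimately show ?thesis
    using q(1) L(2) by (intro nth_equalityI) (auto simp: seq_word_def q_def L_def)
qed

lemma sublist_seq_word_per_seq:
  assumes "sublist w u"
  shows "\<exists>i. seq_word (per_seq u) i (length w) = w"
proof (cases "w = []")
  case True
  then show ?thesis by (simp add: seq_word_def)
next
  case False
  obtain ps ss where u: "u = ps @ w @ ss"
    using assms unfolding sublist_def by blast
  have "length ps < length u"
    using False by (simp add: u)
  then have "nat (int (length ps) mod int (length u)) = length ps"
    by (simp flip: of_nat_mod)
  then have "seq_word (per_seq u) (int (length ps)) (length w) = take (length w) (drop (length ps) (u @ u))"
    using seq_word_per_seq[of "length w" u] by (simp add: u)
  also have "\<dots> = w"
    by (simp add: u)
  finally show ?thesis ..
qed

lemma window_of_double_append:
  assumes "q < length P + length Q" "n \<le> length P" "n \<le> length Q"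
  shows "sublist (take n (drop q (P @ Q @ P @ Q))) (P @ Q) \<or>
         sublist (take n (drop q (P @ Q @ P @ Q))) (Q @ P)"
proof (cases "q + n \<le> length P + length Q")
  case True
  then have "take n (drop q (P @ Q @ P @ Q)) = take n (drop q (P @ Q))"
    using assms(1) by (simp add: drop_append take_append)
  then show ?thesis
    by (metis sublist_drop sublist_take sublist_order.order.trans)
next
  case False
  then have "take n (drop q (P @ Q @ P @ Q)) = take n (drop (q - length P) (Q @ P))"
    using assms by (simp add: drop_append take_append)
  then show ?thesis
    by (metis sublist_drop sublist_take sublist_order.order.trans)
qed

lemma legal_seq_word_eta:
  assumes "n \<le> 2 ^ j"
  shows "legal (seq_word (eta x (Suc j)) i n)"
proof -
  obtain a b where ab: "grs [x] = [a, b]"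
    by (cases x) (auto simp: grs_def)
  define P where "P = (grs ^^ j) [a]"
  define Q where "Q = (grs ^^ j) [b]"
  have "(grs ^^ Suc j) [x] = (grs ^^ j) [a, b]"
    by (simp only: funpow_Suc_right comp_def ab)
  then have u: "(grs ^^ Suc j) [x] = P @ Q"
    using grs_pow_append[of j "[a]" "[b]"] by (simp add: P_def Q_def)
  have len: "length P = 2 ^ j" "length Q = 2 ^ j"
    by (simp_all add: P_def Q_def length_grs_pow)
  define q where "q = nat (i mod int (length (P @ Q)))"
  have q: "q < length P + length Q"
    using len by (simp add: q_def nat_less_iff)
  have "seq_word (eta x (Suc j)) i n = take n (drop q ((P @ Q) @ (P @ Q)))"
    unfolding eta_def u q_def using assms len by (intro seq_word_per_seq) simp
  then have "seq_word (eta x (Suc j)) i n = take n (drop q (P @ Q @ P @ Q))"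
    by simp
  moreover have "legal (P @ Q)"
    using legal_grs_pow_letter u by metis
  moreover have "legal (Q @ P)"
    unfolding P_def Q_def grs_pow_append[symmetric] using legal_grs_pow[OF legal_swap_grs[OF ab]] by simp
  ultimately show ?thesis
    using window_of_double_append[OF q] assms len legal_sublist by metis
qed

section \<open>A point of the subshift\<close>

definition BA_block :: "nat \<Rightarrow> letter list" where
  "BA_block k = (grs ^^ (2 * k)) [B, A]"

lemma length_BA_block: "length (BA_block k) = 2 * 4 ^ k"
  by (simp add: BA_block_def length_grs_pow power_mult)

lemma BA_block_Suc:
  "BA_block (Suc k) = (grs ^^ (2 * k)) [A, B, D] @ BA_block k @ (grs ^^ (2 * k)) [B, A, C]"
proof -
  have "BA_block (Suc k) = (grs ^^ (2 * k)) ((grs ^^ 2) [B, A])"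
    unfolding BA_block_def by (simp add: grs_pow_grs_pow)
  also have "(grs ^^ 2) [B, A] = [A, B, D] @ [B, A] @ [B, A, C]"
    by (simp add: eval_nat_numeral grs_def)
  finally show ?thesis
    by (simp only: grs_pow_append BA_block_def)
qed

lemma legal_BA_block: "legal (BA_block k)"
proof -
  have "sublist [B, A] ((grs ^^ 2) [A])"
    by (simp add: eval_nat_numeral grs_def sublist_Cons_right)
  then show ?thesis
    unfolding BA_block_def legal_def by (metis grs_pow_grs_pow sublist_grs_pow)
qed

text \<open>The two-sided fixed point of \<open>S\<^sup>2\<close> grown around the seed \<open>B.A\<close>: since
  \<open>S\<^sup>2(BA) = ABD\<cdot>BA\<cdot>BAC\<close>, the block \<open>BA_block k\<close> sits in the middle of \<open>BA_block (k+1)\<close>,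
  and position \<open>j\<close> is read off at index \<open>j + 4\<^sup>k\<close> of any block with \<open>|j| \<le> k\<close>.\<close>

definition grs_fixpoint :: "int \<Rightarrow> letter" where
  "grs_fixpoint j = BA_block (nat \<bar>j\<bar>) ! nat (j + 4 ^ nat \<bar>j\<bar>)"

lemma less_four_power: "int k < 4 ^ k"
proof -
  have "k < 4 ^ k"
    by (induct k) auto
  then show ?thesis
    by (metis of_nat_less_iff of_nat_numeral of_nat_power)
qed

lemma grs_fixpoint_eq_nth:
  assumes "nat \<bar>j\<bar> \<le> k"
  shows "grs_fixpoint j = BA_block k ! nat (j + 4 ^ k)"
  using assms
proof (induct k rule: dec_induct)
  case base
  then show ?case by (simp add: grs_fixpoint_def)
next
  case (step k)
  have j: "\<bar>j\<bar> < 4 ^ k"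
    using step(1) less_four_power[of k] by linarith
  have "(4::int) ^ k = int (4 ^ k)"
    by simp
  then have "nat (j + 4 ^ Suc k) = 3 * 4 ^ k + nat (j + 4 ^ k)"
    using j unfolding power_Suc by arith
  also have "3 * 4 ^ k = length ((grs ^^ (2 * k)) [A, B, D])"
    by (simp add: length_grs_pow power_mult)
  finally have "nat (j + 4 ^ Suc k) = length ((grs ^^ (2 * k)) [A, B, D]) + nat (j + 4 ^ k)" .
  moreover have "nat (j + 4 ^ k) < length (BA_block k)"
    using j by (simp add: length_BA_block nat_less_iff)
  ultimately have "BA_block (Suc k) ! nat (j + 4 ^ Suc k) = BA_block k ! nat (j + 4 ^ k)"
    unfolding BA_block_Suc by (simp add: nth_append_length_plus nth_append)
  then show ?case
    using step by simp
qed

lemma seq_word_grs_fixpoint: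
  assumes "nat \<bar>i\<bar> + n \<le> k"
  shows "seq_word grs_fixpoint i n = take n (drop (nat (i + 4 ^ k)) (BA_block k))"
proof -
  have k: "\<bar>i\<bar> + int n < 4 ^ k"
    using assms less_four_power[of k] by linarith
  have "grs_fixpoint (i + int t) = BA_block k ! (nat (i + 4 ^ k) + t)" if "t < n" for t
  proof -
    have "nat (i + int t + 4 ^ k) = nat (i + 4 ^ k) + t"
      using k by arith
    then show ?thesis
      using that assms by (subst grs_fixpoint_eq_nth[of _ k]) auto
  qed
  moreover have "nat (i + 4 ^ k) + n \<le> length (BA_block k)"
  proof -
    have "(4::int) ^ k = int (4 ^ k)"
      by simp
    then show ?thesis
      using k unfolding length_BA_block by arith
  qed
  ultimately show ?thesis
    by (intro nth_equalityI) (auto simp: seq_word_def)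
qed

lemma grs_fixpoint_in_GRS_Xi: "grs_fixpoint \<in> GRS_Xi"
  unfolding GRS_Xi_eq
  by (auto simp: seq_word_grs_fixpoint[OF order_refl] intro: legal_sublist[OF legal_BA_block]
      sublist_order.order.trans[OF sublist_take sublist_drop])

section \<open>Cylinders and subshifts defined by a language\<close>

definition cyl :: "int \<Rightarrow> nat \<Rightarrow> 'a list \<Rightarrow> (int \<Rightarrow> 'a) set" where
  "cyl i n w = {\<xi>. seq_word \<xi> i n = w}"

lemma seq_word_eq_iff:
  "seq_word \<zeta> i n = seq_word \<xi> i n \<longleftrightarrow> (\<forall>t<n. \<zeta> (i + int t) = \<xi> (i + int t))"
  by (simp add: seq_word_def map_eq_conv Ball_def)

lemma openin_cyl: "openin (product_topology (\<lambda>_. discrete_topology UNIV) UNIV) (cyl i n w)"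
  unfolding openin_product_topology_alt
proof
  fix \<xi> assume \<xi>: "\<xi> \<in> cyl i n w"
  define U where "U j = (if j \<in> {i..<i + int n} then {\<xi> j} else UNIV)" for j
  have "finite {j. U j \<noteq> UNIV}"
    by (rule finite_subset[of _ "{i..<i + int n}"]) (auto simp: U_def)
  moreover have "\<xi> \<in> Pi\<^sub>E UNIV U"
    by (simp add: PiE_UNIV_domain U_def)
  moreover have "Pi\<^sub>E UNIV U \<subseteq> cyl i n w"
  proof
    fix \<zeta> assume "\<zeta> \<in> Pi\<^sub>E UNIV U"
    then have "\<forall>t<n. \<zeta> (i + int t) = \<xi> (i + int t)"
      by (auto simp: PiE_UNIV_domain U_def Pi_iff split: if_splits)
    then show "\<zeta> \<in> cyl i n w"
      using \<xi> seq_word_eq_iff[of \<zeta> i n \<xi>] by (simp add: cyl_def)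
  qed
  ultimately show "\<exists>U. finite {j \<in> UNIV. U j \<noteq> topspace (discrete_topology UNIV)} \<and>
      (\<forall>j\<in>UNIV. openin (discrete_topology UNIV) (U j)) \<and> \<xi> \<in> Pi\<^sub>E UNIV U \<and> Pi\<^sub>E UNIV U \<subseteq> cyl i n w"
    by auto
qed

lemma openin_imp_cyl_subset:
  assumes "openin (product_topology (\<lambda>_. discrete_topology UNIV) UNIV) U" "\<xi> \<in> U"
  shows "\<exists>i n. cyl i n (seq_word \<xi> i n) \<subseteq> U"
proof -
  obtain V where V: "finite {j. V j \<noteq> UNIV}" "\<xi> \<in> Pi\<^sub>E UNIV V" "Pi\<^sub>E UNIV V \<subseteq> U"
    using assms unfolding openin_product_topology_alt by auto
  define N where "N = Max (insert 0 (abs ` {j. V j \<noteq> UNIV}))"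
  have N: "\<bar>j\<bar> \<le> N" if "V j \<noteq> UNIV" for j
    unfolding N_def using V(1) that by (intro Max_ge) auto
  have "cyl (- N) (nat (2 * N + 1)) (seq_word \<xi> (- N) (nat (2 * N + 1))) \<subseteq> Pi\<^sub>E UNIV V"
  proof
    fix \<zeta> assume "\<zeta> \<in> cyl (- N) (nat (2 * N + 1)) (seq_word \<xi> (- N) (nat (2 * N + 1)))"
    then have agree: "\<forall>t<nat (2 * N + 1). \<zeta> (- N + int t) = \<xi> (- N + int t)"
      unfolding cyl_def seq_word_eq_iff by simp
    have eq: "\<zeta> j = \<xi> j" if "\<bar>j\<bar> \<le> N" for j
    proof -
      have "nat (j + N) < nat (2 * N + 1)" "- N + int (nat (j + N)) = j"
        using that by auto
      then show ?thesis
        using agree by metis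
    qed
    show "\<zeta> \<in> Pi\<^sub>E UNIV V"
      using V(2) N eq by (fastforce simp: PiE_UNIV_domain)
  qed
  then show ?thesis
    using V(3) by blast
qed

lemma closedin_window_language:
  "closedin (product_topology (\<lambda>_. discrete_topology UNIV) UNIV) {\<xi>. \<forall>i n. P (seq_word \<xi> i n)}"
proof -
  have "UNIV - {\<xi>. \<forall>i n. P (seq_word \<xi> i n)} = \<Union>{cyl i n w | i n w. \<not> P w}"
    by (auto simp: cyl_def)
  then show ?thesis
    unfolding closedin_def using openin_cyl by (auto intro!: openin_Union)
qed

lemma seq_word_shiftT: "seq_word (shiftT \<xi>) i n = seq_word \<xi> (i - 1) n"
  by (simp add: seq_word_def shiftT_def algebra_simps)

lemma shiftT_image_window_language:
  "shiftT ` {\<xi>. \<forall>i n. P (seq_word \<xi> i n)} = {\<xi>. \<forall>i n. P (seq_word \<xi> i n)}"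
proof (intro equalityI subsetI)
  fix \<xi> assume \<xi>: "\<xi> \<in> {\<xi>. \<forall>i n. P (seq_word \<xi> i n)}"
  have "\<xi> = shiftT (\<lambda>j. \<xi> (j + 1))"
    by (rule ext) (simp add: shiftT_def)
  moreover have "seq_word (\<lambda>j. \<xi> (j + 1)) i n = seq_word \<xi> (i + 1) n" for i n
    by (simp add: seq_word_def algebra_simps)
  then have "(\<lambda>j. \<xi> (j + 1)) \<in> {\<xi>. \<forall>i n. P (seq_word \<xi> i n)}"
    using \<xi> by simp
  ultimately show "\<xi> \<in> shiftT ` {\<xi>. \<forall>i n. P (seq_word \<xi> i n)}"
    by (rule image_eqI)
qed (auto simp: seq_word_shiftT)

lemma window_language_in_subshifts:
  "{\<xi>. \<forall>i n. P (seq_word \<xi> i n)} \<noteq> {} \<Longrightarrow> {\<xi>. \<forall>i n. P (seq_word \<xi> i n)} \<in> subshifts"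
  unfolding subshifts_def prodtop_def
  using closedin_window_language shiftT_image_window_language by blast

lemma seq_word_shift_pow: "seq_word (shift_pow m \<eta>) i n = seq_word \<eta> (i - m) n"
  by (simp add: seq_word_def shift_pow_def algebra_simps)

lemma seq_word_Orb: "\<zeta> \<in> Orb \<eta> \<Longrightarrow> \<exists>i'. seq_word \<zeta> i n = seq_word \<eta> i' n"
  unfolding Orb_def using seq_word_shift_pow by blast

lemma periodic_seq_per_seq: "u \<noteq> [] \<Longrightarrow> periodic_seq (per_seq u)"
  unfolding periodic_seq_def per_seq_def by (intro exI[of _ "int (length u)"]) simp

lemma finite_Orb_per_seq:
  assumes "u \<noteq> []"
  shows "finite (Orb (per_seq u))"
proof -
  have "Orb (per_seq u) \<subseteq> (\<lambda>n. shift_pow n (per_seq u)) ` {0..<int (length u)}"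
  proof
    fix \<zeta> assume "\<zeta> \<in> Orb (per_seq u)"
    then obtain n where n: "\<zeta> = shift_pow n (per_seq u)"
      unfolding Orb_def by blast
    have "shift_pow n (per_seq u) = shift_pow (n mod int (length u)) (per_seq u)"
      unfolding shift_pow_def per_seq_def by (simp add: mod_diff_right_eq)
    moreover have "n mod int (length u) \<in> {0..<int (length u)}"
      using assms by simp
    ultimately show "\<zeta> \<in> (\<lambda>n. shift_pow n (per_seq u)) ` {0..<int (length u)}"
      using n by blast
  qed
  then show ?thesis
    using finite_subset by blast
qed

lemma Orb_per_seq_in_subshifts:
  assumes "u \<noteq> []"
  shows "Orb (per_seq u) \<in> subshifts"
proof -
  have "t1_space prodtop"
    unfolding prodtop_def t1_space_product_topology by (simp add: Hausdorff_imp_t1_space)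
  then have "closedin prodtop (Orb (per_seq u))"
    using finite_Orb_per_seq[OF assms] by (simp add: prodtop_def t1_space_closedin_finite)
  moreover have "shiftT (shift_pow n \<eta>) = shift_pow (n + 1) \<eta>" for n and \<eta> :: "int \<Rightarrow> letter"
    by (auto simp: shiftT_def shift_pow_def algebra_simps)
  then have "shiftT ` Orb (per_seq u) = Orb (per_seq u)"
    unfolding Orb_def by (auto simp: image_iff) (metis diff_add_cancel)
  ultimately show ?thesis
    unfolding subshifts_def Orb_def by auto
qed

section \<open>Convergence in the Vietoris topology\<close>

lemma limitin_topology_generated_by:
  assumes "l \<in> \<Union>\<S>" "\<And>V. V \<in> \<S> \<Longrightarrow> l \<in> V \<Longrightarrow> \<forall>\<^sub>F x in F. f x \<in> V"
  shows "limitin (topology_generated_by \<S>) f l F"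
  unfolding limitin_def openin_topology_generated_by_iff
proof (intro conjI allI impI)
  show "l \<in> topspace (topology_generated_by \<S>)"
    using assms(1) by simp
  fix U assume "generate_topology_on \<S> U \<and> l \<in> U"
  then have "generate_topology_on \<S> U" "l \<in> U" by auto
  then show "\<forall>\<^sub>F x in F. f x \<in> U"
  proof (induct rule: generate_topology_on.induct)
    case (Int a b)
    then show ?case by (auto simp: eventually_conj_iff)
  next
    case (UN K)
    then obtain k where "k \<in> K" "l \<in> k" by blast
    with UN have "\<forall>\<^sub>F x in F. f x \<in> k" by blast
    then show ?case by (rule eventually_mono) (use \<open>k \<in> K\<close> in blast)
  qed (use assms(2) in auto)
qed

instance letter :: finite
proof
  have "(UNIV :: letter set) = {A, B, C, D}"
    using letter.exhaust by auto
  then show "finite (UNIV :: letter set)"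
    by (metis finite.emptyI finite_insert)
qed

lemma compact_space_prodtop: "compact_space prodtop"
  unfolding prodtop_def compact_space_product_topology compact_space_discrete_topology by simp

lemma eventually_disjoint_closedin:
  assumes F: "closedin prodtop F" "F \<inter> {\<xi>. \<forall>i n. P (seq_word \<xi> i n)} = {}"
    and sound: "\<And>n. \<forall>\<^sub>F k in sequentially. \<forall>\<zeta>\<in>Y k. \<forall>i. P (seq_word \<zeta> i n)"
  shows "\<forall>\<^sub>F k in sequentially. Y k \<inter> F = {}"
proof -
  define \<C> where "\<C> = {cyl i n w | i n w. \<not> P w}"
  have "F \<subseteq> \<Union>\<C>"
    using F(2) unfolding \<C>_def cyl_def by blast
  moreover have "compactin prodtop F"
    using closedin_compact_space[OF compact_space_prodtop F(1)] .
  moreover have "\<forall>C\<in>\<C>. openin prodtop C"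
    unfolding \<C>_def prodtop_def using openin_cyl by blast
  ultimately obtain \<F> where \<F>: "finite \<F>" "\<F> \<subseteq> \<C>" "F \<subseteq> \<Union>\<F>"
    unfolding compactin_def by meson
  have "\<forall>\<^sub>F k in sequentially. Y k \<inter> C = {}" if "C \<in> \<F>" for C
  proof -
    obtain i n w where C: "C = cyl i n w" "\<not> P w"
      using \<F>(2) \<open>C \<in> \<F>\<close> unfolding \<C>_def by blast
    show ?thesis
      using sound[of n] by (rule eventually_mono) (use C in \<open>auto simp: cyl_def\<close>)
  qed
  then have "\<forall>\<^sub>F k in sequentially. \<forall>C\<in>\<F>. Y k \<inter> C = {}"
    using \<F>(1) by (simp add: eventually_ball_finite)
  then show ?thesis
    by (rule eventually_mono) (use \<F>(3) in blast)
qed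

lemma eventually_meets_openin:
  assumes "openin prodtop U" "\<xi> \<in> U"
    and complete: "\<And>i n. \<forall>\<^sub>F k in sequentially. \<exists>\<zeta>\<in>Y k. seq_word \<zeta> i n = seq_word \<xi> i n"
  shows "\<forall>\<^sub>F k in sequentially. Y k \<inter> U \<noteq> {}"
proof -
  obtain i n where cyl: "cyl i n (seq_word \<xi> i n) \<subseteq> U"
    using openin_imp_cyl_subset assms(1,2) unfolding prodtop_def by blast
  show ?thesis
    using complete[of i n]
  proof (rule eventually_mono)
    fix k assume "\<exists>\<zeta>\<in>Y k. seq_word \<zeta> i n = seq_word \<xi> i n"
    then show "Y k \<inter> U \<noteq> {}"
      using cyl by (auto simp: cyl_def)
  qed
qed

lemma limitin_vietoris_window_language:
  assumes X: "X = {\<xi>. \<forall>i n. P (seq_word \<xi> i n)}" "X \<noteq> {}"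
    and Y: "\<And>k. Y k \<in> subshifts"
    and sound: "\<And>n. \<forall>\<^sub>F k in sequentially. \<forall>\<zeta>\<in>Y k. \<forall>i. P (seq_word \<zeta> i n)"
    and complete: "\<And>\<xi> i n. \<xi> \<in> X \<Longrightarrow>
      \<forall>\<^sub>F k in sequentially. \<exists>\<zeta>\<in>Y k. seq_word \<zeta> i n = seq_word \<xi> i n"
  shows "limitin vietoris Y X sequentially"
  unfolding vietoris_def
proof (rule limitin_topology_generated_by)
  have "X \<in> subshifts"
    using X window_language_in_subshifts by blast
  then show "X \<in> \<Union>{{X \<in> subshifts. X \<inter> F = {} \<and> (\<forall>U\<in>\<U>. X \<inter> U \<noteq> {})} | F \<U>.
      closedin prodtop F \<and> finite \<U> \<and> (\<forall>U\<in>\<U>. openin prodtop U)}"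
    by (intro UnionI[of "subshifts"]) (auto intro!: exI[of _ "{}"])
next
  fix V
  assume "V \<in> {{X \<in> subshifts. X \<inter> F = {} \<and> (\<forall>U\<in>\<U>. X \<inter> U \<noteq> {})} | F \<U>.
      closedin prodtop F \<and> finite \<U> \<and> (\<forall>U\<in>\<U>. openin prodtop U)}" "X \<in> V"
  then obtain F \<U> where V: "V = {X \<in> subshifts. X \<inter> F = {} \<and> (\<forall>U\<in>\<U>. X \<inter> U \<noteq> {})}"
      "closedin prodtop F" "finite \<U>" "\<forall>U\<in>\<U>. openin prodtop U"
    and XV: "X \<inter> F = {}" "\<forall>U\<in>\<U>. X \<inter> U \<noteq> {}"
    by auto
  have "\<forall>\<^sub>F k in sequentially. Y k \<inter> F = {}"
    using eventually_disjoint_closedin[OF V(2) _ sound] XV(1) X(1) by blast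
  moreover have "\<forall>\<^sub>F k in sequentially. \<forall>U\<in>\<U>. Y k \<inter> U \<noteq> {}"
    using V(3)
  proof (rule eventually_ball_finite, intro ballI)
    fix U assume "U \<in> \<U>"
    then obtain \<xi> where "\<xi> \<in> X" "\<xi> \<in> U"
      using XV(2) by blast
    then show "\<forall>\<^sub>F k in sequentially. Y k \<inter> U \<noteq> {}"
      using eventually_meets_openin V(4) \<open>U \<in> \<U>\<close> complete by blast
  qed
  ultimately show "\<forall>\<^sub>F k in sequentially. Y k \<in> V"
    by (rule eventually_elim2) (simp add: V(1) Y)
qed

lemma eventually_windows_Orb_eta_legal:
  "\<forall>\<^sub>F k in sequentially. \<forall>\<zeta>\<in>Orb (eta x k). \<forall>i. legal (seq_word \<zeta> i n)"
proof (rule eventually_sequentiallyI[of "Suc n"])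
  fix k assume "Suc n \<le> k"
  then obtain j where k: "k = Suc j" and "n \<le> j"
    by (cases k) auto
  then have "n \<le> 2 ^ j"
    using less_exp[of j] by linarith
  then show "\<forall>\<zeta>\<in>Orb (eta x k). \<forall>i. legal (seq_word \<zeta> i n)"
    unfolding k using seq_word_Orb legal_seq_word_eta by metis
qed

lemma eventually_Orb_eta_has_window:
  assumes "legal w"
  shows "\<forall>\<^sub>F k in sequentially. \<exists>\<zeta>\<in>Orb (eta x k). seq_word \<zeta> i (length w) = w"
  using legal_imp_eventually_sublist[OF assms]
proof (rule eventually_mono)
  fix k assume "sublist w ((grs ^^ k) [x])"
  then obtain i' where "seq_word (eta x k) i' (length w) = w"
    unfolding eta_def by (blast dest: sublist_seq_word_per_seq)
  then have "seq_word (shift_pow (i - i') (eta x k)) i (length w) = w"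
    by (simp add: seq_word_shift_pow)
  then show "\<exists>\<zeta>\<in>Orb (eta x k). seq_word \<zeta> i (length w) = w"
    unfolding Orb_def by blast
qed

theorem proposition15:
  shows "periodically_approximable GRS_Xi \<and>
    (\<forall>x::letter. limitin vietoris (\<lambda>k. Orb (eta x k)) GRS_Xi sequentially)"
proof -
  have lim: "limitin vietoris (\<lambda>k. Orb (eta x k)) GRS_Xi sequentially" for x
  proof (rule limitin_vietoris_window_language[OF GRS_Xi_eq])
    show "GRS_Xi \<noteq> {}"
      using grs_fixpoint_in_GRS_Xi by blast
    show "Orb (eta x k) \<in> subshifts" for k
      unfolding eta_def by (rule Orb_per_seq_in_subshifts[OF grs_pow_letter_ne_Nil])
    show "\<forall>\<^sub>F k in sequentially. \<forall>\<zeta>\<in>Orb (eta x k). \<forall>i. legal (seq_word \<zeta> i n)" for n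
      by (rule eventually_windows_Orb_eta_legal)
    show "\<forall>\<^sub>F k in sequentially. \<exists>\<zeta>\<in>Orb (eta x k). seq_word \<zeta> i n = seq_word \<xi> i n"
      if "\<xi> \<in> GRS_Xi" for \<xi> i n
      using eventually_Orb_eta_has_window[of "seq_word \<xi> i n"] that
      by (simp add: GRS_Xi_eq seq_word_def)
  qed
  have "periodic_seq (eta A k)" for k
    unfolding eta_def by (rule periodic_seq_per_seq[OF grs_pow_letter_ne_Nil])
  then show ?thesis
    unfolding periodically_approximable_def using lim by blast
qed

end
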